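(* Let $\sigma(x)=1/(1+e^{-x})$, let $k\in\mathbb{N}$ and let $t_\sigma\in\mathbb{R}$ with $\sigma^{(k)}(t_\sigma)\ne0$. Then for every $N\in\mathbb{N}$ with $N>k$ there exist $\alpha_j,\beta_j\in\mathbb{R}$ ($j=0,\dots,N-1$) and a constant $c_{54}\ge0$ such that $$f_{net,x^k}(x)=\frac{k!}{\sigma^{(k)}(t_\sigma)}\sum_{j=0}^{N-1}\alpha_j\,\sigma(\beta_jx+t_\sigma)$$ satisfies, for all $A>0$ and all $x\in[-A,A]$, $|f_{net,x^k}(x)-x^k|\le c_{54}A^N$.
   Context: $\sigma^{(k)}$ denotes the $k$-th derivative of $\sigma$. *)

theory Defs
  imports "HOL-Analysis.Analysis"
begin

definition sigmoid :: "real \<Rightarrow> real" where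
  "sigmoid x = 1 / (1 + exp (- x))"

abbreviation nth_deriv :: "nat \<Rightarrow> (real \<Rightarrow> real) \<Rightarrow> real \<Rightarrow> real" where
  "nth_deriv k f \<equiv> (deriv ^^ k) f"

end

theory Submission
  imports Defs "HOL-Computational_Algebra.Polynomial"
begin

text \<open>
  Since \<open>\<sigma>' = \<sigma> (1 - \<sigma>)\<close>, every derivative of \<open>\<sigma>\<close> is a polynomial in \<open>\<sigma>\<close>, hence bounded on
  \<open>\<real>\<close>. Taylor expansion of \<open>x \<mapsto> \<Sum>\<^sub>j \<alpha>\<^sub>j \<sigma>(j x + t)\<close> at \<open>0\<close> up to order \<open>N - 1\<close> has the
  coefficients \<open>(\<Sum>\<^sub>j \<alpha>\<^sub>j j\<^sup>m) \<sigma>\<^sup>(\<^sup>m\<^sup>)(t) / m!\<close>, and the remainder is \<open>O(|x|\<^sup>N)\<close>. Choosing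
  \<open>\<alpha>\<^sub>j\<close> as the \<open>k\<close>-th coefficients of the Lagrange basis polynomials for the nodes
  \<open>0, \<dots>, N - 1\<close> makes the moments \<open>\<Sum>\<^sub>j \<alpha>\<^sub>j j\<^sup>m\<close> (\<open>m < N\<close>) vanish except for \<open>m = k\<close>,
  where they equal \<open>1\<close>; so all Taylor coefficients but the \<open>k\<close>-th vanish.
\<close>

lemma Maclaurin_remainder_bound:
  fixes f :: "real \<Rightarrow> real" and diff :: "nat \<Rightarrow> real \<Rightarrow> real"
  assumes "diff 0 = f"
    and "\<And>m y. (diff m has_real_derivative diff (Suc m) y) (at y)"
    and "\<And>y. \<bar>diff n y\<bar> \<le> B"
  shows "\<bar>f x - (\<Sum>m<n. diff m 0 / fact m * x ^ m)\<bar> \<le> B / fact n * \<bar>x\<bar> ^ n"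
proof -
  obtain \<xi> where "f x = (\<Sum>m<n. diff m 0 / fact m * x ^ m) + diff n \<xi> / fact n * x ^ n"
    using Maclaurin_all_le[of diff f] assms(1,2) by blast
  then have "\<bar>f x - (\<Sum>m<n. diff m 0 / fact m * x ^ m)\<bar> = \<bar>diff n \<xi>\<bar> / fact n * \<bar>x\<bar> ^ n"
    by (simp add: abs_mult power_abs)
  also have "\<dots> \<le> B / fact n * \<bar>x\<bar> ^ n"
    by (intro mult_right_mono divide_right_mono assms(3)) auto
  finally show ?thesis .
qed

lemma has_real_derivative_ridge_sum:
  fixes D :: "nat \<Rightarrow> real \<Rightarrow> real"
  assumes "\<And>m y. (D m has_real_derivative D (Suc m) y) (at y)"
  shows "((\<lambda>x. \<Sum>j<J. a j * D m (b j * x + t)) has_real_derivative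
           (\<Sum>j<J. a j * b j * D (Suc m) (b j * x + t))) (at x)"
proof -
  have "((\<lambda>x. D m (b j * x + t)) has_real_derivative D (Suc m) (b j * x + t) * b j) (at x)" for j
    by (rule DERIV_chain2[OF assms]) (auto intro!: derivative_eq_intros)
  then show ?thesis
    by (auto intro!: DERIV_sum DERIV_cmult simp: ac_simps)
qed

lemma ridge_sum_Maclaurin_bound:
  fixes D :: "nat \<Rightarrow> real \<Rightarrow> real" and a b :: "nat \<Rightarrow> real"
  assumes "\<And>m y. (D m has_real_derivative D (Suc m) y) (at y)"
    and "\<And>y. \<bar>D n y\<bar> \<le> M"
  shows "\<bar>(\<Sum>j<J. a j * D 0 (b j * x + t))
           - (\<Sum>m<n. (\<Sum>j<J. a j * b j ^ m) * D m t / fact m * x ^ m)\<bar>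
         \<le> (\<Sum>j<J. \<bar>a j\<bar> * \<bar>b j\<bar> ^ n) * M / fact n * \<bar>x\<bar> ^ n"
proof -
  define diff where "diff m y = (\<Sum>j<J. a j * b j ^ m * D m (b j * y + t))" for m y
  have "(diff m has_real_derivative diff (Suc m) y) (at y)" for m y
    using has_real_derivative_ridge_sum
        [where D = D and a = "\<lambda>j. a j * b j ^ m" and b = b and m = m, OF assms(1)]
    by (simp add: diff_def[abs_def] ac_simps)
  moreover have "\<bar>diff n y\<bar> \<le> (\<Sum>j<J. \<bar>a j\<bar> * \<bar>b j\<bar> ^ n) * M" for y
  proof -
    have "\<bar>diff n y\<bar> \<le> (\<Sum>j<J. \<bar>a j\<bar> * \<bar>b j\<bar> ^ n * \<bar>D n (b j * y + t)\<bar>)"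
      unfolding diff_def by (rule order.trans[OF sum_abs]) (simp add: abs_mult power_abs)
    also have "\<dots> \<le> (\<Sum>j<J. \<bar>a j\<bar> * \<bar>b j\<bar> ^ n * M)"
      by (intro sum_mono mult_left_mono assms(2)) auto
    finally show ?thesis
      by (simp add: sum_distrib_right)
  qed
  moreover have "diff m 0 = (\<Sum>j<J. a j * b j ^ m) * D m t" for m
    by (simp add: diff_def sum_distrib_right)
  ultimately show ?thesis
    using Maclaurin_remainder_bound[of diff "diff 0"] by (simp add: diff_def)
qed

definition lagrange_basis :: "(nat \<Rightarrow> 'a::field) \<Rightarrow> nat \<Rightarrow> nat \<Rightarrow> 'a poly" where
  "lagrange_basis x n j =
     smult (inverse (\<Prod>i\<in>{..<n} - {j}. x j - x i)) (\<Prod>i\<in>{..<n} - {j}. [:- x i, 1:])"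

lemma poly_lagrange_basis:
  assumes "inj_on x {..<n}" "i < n" "j < n"
  shows "poly (lagrange_basis x n j) (x i) = (if i = j then 1 else 0)"
proof (cases "i = j")
  case True
  have "(\<Prod>l\<in>{..<n} - {j}. x j - x l) \<noteq> 0"
    using assms by (auto simp: prod_zero_iff inj_on_eq_iff)
  with True show ?thesis
    by (simp add: lagrange_basis_def poly_prod)
next
  case False
  then have "(\<Prod>l\<in>{..<n} - {j}. poly [:- x l, 1:] (x i)) = 0"
    using assms by (intro prod_zero) auto
  with False show ?thesis
    by (simp add: lagrange_basis_def poly_prod)
qed

lemma degree_lagrange_basis_less:
  assumes "j < n"
  shows "degree (lagrange_basis x n j) < n"
proof -
  have "degree (lagrange_basis x n j) \<le> degree (\<Prod>i\<in>{..<n} - {j}. [:- x i, 1:])"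
    unfolding lagrange_basis_def by (rule degree_smult_le)
  also have "\<dots> \<le> sum (degree \<circ> (\<lambda>i. [:- x i, 1:])) ({..<n} - {j})"
    by (rule degree_prod_sum_le) simp
  also have "\<dots> = n - 1"
    using assms by simp
  finally show ?thesis
    using assms by linarith
qed

lemma lagrange_interpolation:
  fixes p :: "'a::field poly"
  assumes "inj_on x {..<n}" "degree p < n"
  shows "(\<Sum>j<n. smult (poly p (x j)) (lagrange_basis x n j)) = p"
proof (rule poly_eqI_degree[where A = "x ` {..<n}"])
  show "poly (\<Sum>j<n. smult (poly p (x j)) (lagrange_basis x n j)) y = poly p y"
    if "y \<in> x ` {..<n}" for y
  proof -
    from that obtain i where i: "i < n" "y = x i" by auto
    have "poly (\<Sum>j<n. smult (poly p (x j)) (lagrange_basis x n j)) y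
            = (\<Sum>j<n. poly p (x j) * poly (lagrange_basis x n j) (x i))"
      using i by (simp add: poly_sum)
    also have "\<dots> = (\<Sum>j<n. if j = i then poly p (x j) else 0)"
      using assms(1) i by (intro sum.cong) (auto simp: poly_lagrange_basis)
    also have "\<dots> = poly p y"
      using i by simp
    finally show ?thesis .
  qed
  have card: "card (x ` {..<n}) = n"
    using assms(1) by (simp add: card_image)
  have "degree (\<Sum>j<n. smult (poly p (x j)) (lagrange_basis x n j)) \<le> n - 1"
    by (intro degree_sum_le order.trans[OF degree_smult_le])
      (auto dest: degree_lagrange_basis_less[of _ _ x])
  with card assms(2) show "degree (\<Sum>j<n. smult (poly p (x j)) (lagrange_basis x n j))
                             < card (x ` {..<n})"
    by linarith
  from card assms(2) show "degree p < card (x ` {..<n})" by simp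
qed

lemma sum_power_coeff_lagrange_basis:
  assumes "inj_on x {..<n}" "m < n"
  shows "(\<Sum>j<n. x j ^ m * coeff (lagrange_basis x n j) k) = (if m = k then 1 else 0)"
proof -
  have "(\<Sum>j<n. smult (x j ^ m) (lagrange_basis x n j)) = monom 1 m"
    using lagrange_interpolation[OF assms(1), of "monom 1 m"] assms(2)
    by (simp add: poly_monom degree_monom_eq)
  then have "coeff (\<Sum>j<n. smult (x j ^ m) (lagrange_basis x n j)) k = coeff (monom 1 m) k"
    by simp
  then show ?thesis
    by (simp add: coeff_sum coeff_monom)
qed

lemma Taylor_polynomial_lagrange_weights:
  fixes b d :: "nat \<Rightarrow> real"
  assumes "inj_on b {..<N}" "d k \<noteq> 0" "k < N"
  shows "(\<Sum>m<N. (\<Sum>j<N. fact k / d k * coeff (lagrange_basis b N j) k * b j ^ m) * d m / fact m * x ^ m)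
           = x ^ k"
proof -
  have "(\<Sum>j<N. fact k / d k * coeff (lagrange_basis b N j) k * b j ^ m) * d m / fact m
          = (if m = k then 1 else 0)" if "m < N" for m
  proof -
    have "(\<Sum>j<N. fact k / d k * coeff (lagrange_basis b N j) k * b j ^ m)
            = fact k / d k * (\<Sum>j<N. b j ^ m * coeff (lagrange_basis b N j) k)"
      by (simp add: sum_distrib_left ac_simps)
    with sum_power_coeff_lagrange_basis[OF assms(1) that] assms(2) show ?thesis
      by simp
  qed
  then have "(\<Sum>m<N. (\<Sum>j<N. fact k / d k * coeff (lagrange_basis b N j) k * b j ^ m) * d m / fact m * x ^ m)
               = (\<Sum>m<N. if m = k then x ^ k else 0)"
    by (intro sum.cong) auto
  with assms(3) show ?thesis
    by simp
qed

lemma sigmoid_pos: "0 < sigmoid x"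
  by (simp add: sigmoid_def add_pos_pos)

lemma sigmoid_less_1: "sigmoid x < 1"
  by (simp add: sigmoid_def add_pos_pos)

lemma has_real_derivative_sigmoid:
  "(sigmoid has_real_derivative sigmoid x * (1 - sigmoid x)) (at x)"
proof -
  have nz: "1 + exp (- x) \<noteq> 0"
    using exp_gt_zero[of "- x"] by linarith
  have "((\<lambda>x. 1 / (1 + exp (- x))) has_real_derivative exp (- x) / (1 + exp (- x))\<^sup>2) (at x)"
    using nz by (auto intro!: derivative_eq_intros simp: power2_eq_square)
  moreover have "exp (- x) / (1 + exp (- x))\<^sup>2 = sigmoid x * (1 - sigmoid x)"
    using nz by (simp add: sigmoid_def field_simps power2_eq_square)
  ultimately show ?thesis
    by (simp add: sigmoid_def[abs_def])
qed

lemma has_real_derivative_poly_sigmoid: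
  "((\<lambda>y. poly p (sigmoid y)) has_real_derivative poly (pderiv p * [:0, 1, -1:]) (sigmoid x)) (at x)"
proof -
  have "((\<lambda>y. poly p (sigmoid y)) has_real_derivative
          sigmoid x * (1 - sigmoid x) * poly (pderiv p) (sigmoid x)) (at x)"
    by (rule has_field_derivative_poly[OF has_real_derivative_sigmoid])
  then show ?thesis
    by (simp add: algebra_simps)
qed

fun sigmoid_deriv_poly :: "nat \<Rightarrow> real poly" where
  "sigmoid_deriv_poly 0 = [:0, 1:]"
| "sigmoid_deriv_poly (Suc m) = pderiv (sigmoid_deriv_poly m) * [:0, 1, -1:]"

lemma nth_deriv_sigmoid: "nth_deriv m sigmoid = (\<lambda>y. poly (sigmoid_deriv_poly m) (sigmoid y))"
proof (induction m)
  case 0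
  then show ?case by simp
next
  case (Suc m)
  have "nth_deriv (Suc m) sigmoid = deriv (\<lambda>y. poly (sigmoid_deriv_poly m) (sigmoid y))"
    using Suc.IH by simp
  also have "\<dots> = (\<lambda>y. poly (sigmoid_deriv_poly (Suc m)) (sigmoid y))"
    by (rule ext, unfold sigmoid_deriv_poly.simps)
      (rule DERIV_imp_deriv[OF has_real_derivative_poly_sigmoid])
  finally show ?case .
qed

lemma has_real_derivative_nth_deriv_sigmoid:
  "(nth_deriv m sigmoid has_real_derivative nth_deriv (Suc m) sigmoid x) (at x)"
  unfolding nth_deriv_sigmoid sigmoid_deriv_poly.simps by (rule has_real_derivative_poly_sigmoid)

lemma bounded_nth_deriv_sigmoid: "\<exists>M. \<forall>y. \<bar>nth_deriv m sigmoid y\<bar> \<le> M"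
proof -
  have "bounded (poly (sigmoid_deriv_poly m) ` {0..1})"
    by (intro compact_imp_bounded compact_continuous_image continuous_on_poly continuous_on_id)
      simp
  then obtain M where M: "\<forall>z\<in>{0..1}. \<bar>poly (sigmoid_deriv_poly m) z\<bar> \<le> M"
    unfolding bounded_iff by auto
  have "sigmoid y \<in> {0..1}" for y
    using sigmoid_pos[of y] sigmoid_less_1[of y] by simp
  with M show ?thesis
    unfolding nth_deriv_sigmoid by blast
qed

theorem lemma9:
  fixes k N :: nat and t :: real
  assumes "nth_deriv k sigmoid t \<noteq> 0"
    and "N > k"
  shows "\<exists>(\<alpha>::nat \<Rightarrow> real) (\<beta>::nat \<Rightarrow> real) (c::real). c \<ge> 0 \<and>
           (\<forall>A::real. A > 0 \<longrightarrow> (\<forall>x\<in>{-A..A}.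
              \<bar>fact k / nth_deriv k sigmoid t * (\<Sum>j<N. \<alpha> j * sigmoid (\<beta> j * x + t)) - x ^ k\<bar>
                \<le> c * A ^ N))"
proof -
  obtain M where M: "\<And>y. \<bar>nth_deriv N sigmoid y\<bar> \<le> M"
    using bounded_nth_deriv_sigmoid by blast
  define C where "C = fact k / nth_deriv k sigmoid t"
  define \<alpha> where "\<alpha> j = coeff (lagrange_basis real N j) k" for j
  define c where "c = (\<Sum>j<N. \<bar>C * \<alpha> j\<bar> * \<bar>real j\<bar> ^ N) * M / fact N"
  have Taylor_polynomial:
    "(\<Sum>m<N. (\<Sum>j<N. C * \<alpha> j * real j ^ m) * nth_deriv m sigmoid t / fact m * x ^ m) = x ^ k"
    for x
    using Taylor_polynomial_lagrange_weights[of real N "\<lambda>m. nth_deriv m sigmoid t"] assms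
    by (simp add: C_def \<alpha>_def inj_on_def)
  have "c \<ge> 0"
    using abs_ge_zero order.trans[OF _ M] unfolding c_def
    by (intro divide_nonneg_pos mult_nonneg_nonneg sum_nonneg) auto
  moreover have "\<bar>C * (\<Sum>j<N. \<alpha> j * sigmoid (real j * x + t)) - x ^ k\<bar> \<le> c * A ^ N"
    if "x \<in> {-A..A}" for A x
  proof -
    have "\<bar>(\<Sum>j<N. C * \<alpha> j * nth_deriv 0 sigmoid (real j * x + t)) - x ^ k\<bar>
            \<le> c * \<bar>x\<bar> ^ N"
      using ridge_sum_Maclaurin_bound[where D = "\<lambda>m. nth_deriv m sigmoid" and a = "\<lambda>j. C * \<alpha> j"
          and b = real and J = N and x = x and t = t, OF has_real_derivative_nth_deriv_sigmoid M]
      unfolding Taylor_polynomial c_def .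
    then have "\<bar>C * (\<Sum>j<N. \<alpha> j * sigmoid (real j * x + t)) - x ^ k\<bar> \<le> c * \<bar>x\<bar> ^ N"
      by (simp add: sum_distrib_left ac_simps)
    also have "\<dots> \<le> c * A ^ N"
      using that \<open>c \<ge> 0\<close> by (intro mult_left_mono power_mono) auto
    finally show ?thesis .
  qed
  ultimately show ?thesis
    unfolding C_def by blast
qed

end
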